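(* Let $G=(V,E)$ be a classical graph with vertex set $V=[n]$ and let $f\colon V \to \mathbb{C}^d$ be an orthogonal representation of $G$. Then the completely positive map $\phi\colon M_n \to M_d$ defined by $\phi(X) = \sum_{i=1}^n |f(i)\rangle\langle e_i| X |e_i\rangle\langle f(i)|$ for all $X\in M_n$ is an orthogonal representation of the quantum graph $\mathcal{S}_G=\operatorname{span}\{|e_i\rangle\langle e_j| : i=j\text{ or } i \text{ adjacent to } j\}$.
   Context: $(|e_k\rangle)$ is the standard basis of $\mathbb{C}^n$. A classical orthogonal representation of $G$ is a map $f\colon V\to\mathbb{C}^d$ such that $f(i)\perp f(j)$ whenever $i\neq j$ and $i,j$ are not adjacent. Elements $a,b$ of a $C^*$-algebra are orthogonal, $a\perp b$, if $ab=ba=a^*b=ab^*=0$. For a quantum graph $\mathcal{S}\subseteq M_n$ (a subspace closed under adjoints containing $I_n$), a completely positive map $\phi\colon M_n\to M_d$ is an orthogonal representation of $\mathcal{S}$ if $\phi(A)\perp\phi(B)$ for all $A,B\in M_n$ with $A\mathcal{S}B=B\mathcal{S}A=A^*\mathcal{S}B=A\mathcal{S}B^*=\{0\}$. *)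

theory Defs
  imports "Jordan_Normal_Form.Matrix"
begin

definition cadj :: "complex mat \<Rightarrow> complex mat" where
  "cadj A = mat (dim_col A) (dim_row A) (\<lambda>(i, j). cnj (A $$ (j, i)))"

definition cinner :: "complex vec \<Rightarrow> complex vec \<Rightarrow> complex" where
  "cinner u v = (\<Sum>i<dim_vec v. cnj (u $ i) * v $ i)"

definition ket :: "complex vec \<Rightarrow> complex mat" where
  "ket v = mat (dim_vec v) 1 (\<lambda>(i, j). v $ i)"

definition bra :: "complex vec \<Rightarrow> complex mat" where
  "bra v = cadj (ket v)"

definition msum :: "nat \<Rightarrow> (nat \<Rightarrow> complex mat) \<Rightarrow> nat \<Rightarrow> complex mat" where
  "msum d g n = foldr (+) (map g [0..<n]) (0\<^sub>m d d)"

definition simple_graph :: "nat \<Rightarrow> (nat \<Rightarrow> nat \<Rightarrow> bool) \<Rightarrow> bool" where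
  "simple_graph n E \<longleftrightarrow> (\<forall>i<n. \<forall>j<n. E i j \<longrightarrow> E j i) \<and> (\<forall>i<n. \<not> E i i)"

definition classical_orth_rep :: "nat \<Rightarrow> (nat \<Rightarrow> nat \<Rightarrow> bool) \<Rightarrow> nat \<Rightarrow> (nat \<Rightarrow> complex vec) \<Rightarrow> bool" where
  "classical_orth_rep n E d f \<longleftrightarrow>
     (\<forall>i<n. f i \<in> carrier_vec d) \<and>
     (\<forall>i<n. \<forall>j<n. i \<noteq> j \<and> \<not> E i j \<longrightarrow> cinner (f i) (f j) = 0)"

definition eunit :: "nat \<Rightarrow> nat \<Rightarrow> nat \<Rightarrow> complex mat" where
  "eunit n i j = ket (unit_vec n i) * bra (unit_vec n j)"

definition graph_qgraph :: "nat \<Rightarrow> (nat \<Rightarrow> nat \<Rightarrow> bool) \<Rightarrow> complex mat set" where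
  "graph_qgraph n E = {S. \<exists>c :: nat \<Rightarrow> nat \<Rightarrow> complex.
      S = msum n (\<lambda>i. msum n (\<lambda>j. (if i = j \<or> E i j then c i j else 0) \<cdot>\<^sub>m eunit n i j) n) n}"

definition orth :: "complex mat \<Rightarrow> complex mat \<Rightarrow> bool" where
  "orth a b \<longleftrightarrow> a * b = 0\<^sub>m (dim_row a) (dim_col b) \<and> b * a = 0\<^sub>m (dim_row b) (dim_col a)
     \<and> cadj a * b = 0\<^sub>m (dim_col a) (dim_col b) \<and> a * cadj b = 0\<^sub>m (dim_row a) (dim_row b)"

definition psd :: "nat \<Rightarrow> complex mat \<Rightarrow> bool" where
  "psd m M \<longleftrightarrow> M \<in> carrier_mat m m \<and>
     (\<forall>v \<in> carrier_vec m. \<exists>r :: real. r \<ge> 0 \<and> cinner v (M *\<^sub>v v) = complex_of_real r)"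

text \<open>the (a,b) block of a block matrix in M_k(M_n), viewed as a kn x kn matrix\<close>
definition block :: "nat \<Rightarrow> complex mat \<Rightarrow> nat \<Rightarrow> nat \<Rightarrow> complex mat" where
  "block n X a b = mat n n (\<lambda>(i, j). X $$ (a * n + i, b * n + j))"

text \<open>phi : M_n -> M_d linear and completely positive: id_k (x) phi maps positive
  elements of M_k(M_n) to positive elements of M_k(M_d), for every k\<close>
definition completely_positive :: "nat \<Rightarrow> nat \<Rightarrow> (complex mat \<Rightarrow> complex mat) \<Rightarrow> bool" where
  "completely_positive n d \<phi> \<longleftrightarrow>
     (\<forall>A \<in> carrier_mat n n. \<phi> A \<in> carrier_mat d d) \<and>
     (\<forall>A \<in> carrier_mat n n. \<forall>B \<in> carrier_mat n n. \<phi> (A + B) = \<phi> A + \<phi> B) \<and>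
     (\<forall>A \<in> carrier_mat n n. \<forall>c. \<phi> (c \<cdot>\<^sub>m A) = c \<cdot>\<^sub>m \<phi> A) \<and>
     (\<forall>k. \<forall>X. psd (k * n) X \<longrightarrow>
        psd (k * d) (mat (k * d) (k * d) (\<lambda>(r, s). \<phi> (block n X (r div d) (s div d)) $$ (r mod d, s mod d))))"

definition qgraph_orth_rep :: "nat \<Rightarrow> complex mat set \<Rightarrow> nat \<Rightarrow> (complex mat \<Rightarrow> complex mat) \<Rightarrow> bool" where
  "qgraph_orth_rep n S d \<phi> \<longleftrightarrow> completely_positive n d \<phi> \<and>
     (\<forall>A \<in> carrier_mat n n. \<forall>B \<in> carrier_mat n n.
        (\<forall>T \<in> S. A * T * B = 0\<^sub>m n n \<and> B * T * A = 0\<^sub>m n n \<and>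
                   cadj A * T * B = 0\<^sub>m n n \<and> A * T * cadj B = 0\<^sub>m n n)
        \<longrightarrow> orth (\<phi> A) (\<phi> B))"

end

theory Submission
  imports Defs
begin

(* The map has the Kraus form phi(X) = sum_i K_i^* X K_i with K_i = |e_i><f(i)|, so
   id_k (x) phi is the sum of the congruences by the ampliations I_k (x) K_i and therefore
   preserves positivity. Evaluating the same sum gives phi(X) = sum_i X_ii |f(i)><f(i)|, hence
   phi(A) phi(B) = sum_{i,j} A_ii B_jj <f(i),f(j)> |f(i)><f(j)|. If i = j or i ~ j, the matrix
   unit E_ij lies in S_G and (A E_ij B)_ij = A_ii B_jj must vanish; for every other pair
   <f(i),f(j)> = 0 because f is an orthogonal representation. As <f(j),f(i)> is the conjugate
   of <f(i),f(j)>, this single condition already makes all four products in the definition of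
   orthogonality vanish. *)

lemma msum_eq_mat:
  assumes "\<And>i. i < m \<Longrightarrow> g i \<in> carrier_mat d d"
  shows "msum d g m = mat d d (\<lambda>(r, s). \<Sum>i<m. g i $$ (r, s))"
proof -
  have "foldr (+) (map g xs) (0\<^sub>m d d) = mat d d (\<lambda>(r, s). \<Sum>i\<leftarrow>xs. g i $$ (r, s))"
    if "\<forall>i\<in>set xs. g i \<in> carrier_mat d d" for xs
    using that by (induction xs) (auto intro!: eq_matI)
  then show ?thesis
    unfolding msum_def using assms
    by (simp add: sum_set_upt_conv_sum_list_nat[symmetric] atLeast0LessThan)
qed

lemma msum_cong: "(\<And>i. i < m \<Longrightarrow> g i = h i) \<Longrightarrow> msum d g m = msum d h m"
  unfolding msum_def by (metis atLeastLessThan_iff map_cong set_upt)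

lemma sum_mult_split:
  fixes g :: "nat \<Rightarrow> 'a::comm_monoid_add"
  shows "(\<Sum>t<k * n. g t) = (\<Sum>a<k. \<Sum>j<n. g (a * n + j))"
proof -
  have "(\<Sum>t<k * n. g t) = (\<Sum>a<k. sum g {a * n..<a * n + n})"
    using sum.nat_group[of g n k] by simp
  also have "\<dots> = (\<Sum>a<k. \<Sum>j<n. g (a * n + j))"
  proof (rule sum.cong[OF refl])
    fix a
    have "sum g {a * n..<a * n + n} = sum g {0 + a * n..<n + a * n}"
      by (simp add: add.commute)
    also have "\<dots> = (\<Sum>j<n. g (j + a * n))"
      by (simp only: sum.shift_bounds_nat_ivl atLeast0LessThan)
    finally show "sum g {a * n..<a * n + n} = (\<Sum>j<n. g (a * n + j))"
      by (simp add: add.commute)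
  qed
  finally show ?thesis .
qed

lemma sum_sum_delta:
  fixes i j m m' :: nat
  assumes "i < m" "j < m'"
  shows "(\<Sum>a<m. \<Sum>b<m'. if a = i \<and> b = j then g a b else 0) = g i j"
proof -
  have "(\<Sum>b<m'. if a = i \<and> b = j then g a b else 0) = (if a = i then g a j else 0)" for a
    using assms(2) by (cases "a = i") simp_all
  then show ?thesis using assms(1) by simp
qed

lemma dim_cadj [simp]: "dim_row (cadj A) = dim_col A" "dim_col (cadj A) = dim_row A"
  by (simp_all add: cadj_def)

lemma index_cadj [simp]: "i < dim_col A \<Longrightarrow> j < dim_row A \<Longrightarrow> cadj A $$ (i, j) = cnj (A $$ (j, i))"
  by (simp add: cadj_def)

lemma cadj_carrier_mat: "A \<in> carrier_mat m l \<Longrightarrow> cadj A \<in> carrier_mat l m"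
  by (rule carrier_matI) (simp_all add: carrier_matD)

lemma index_mult_mult:
  assumes "A \<in> carrier_mat l m" "M \<in> carrier_mat m m'" "B \<in> carrier_mat m' l'" "r < l" "s < l'"
  shows "(A * M * B) $$ (r, s) = (\<Sum>t<m. \<Sum>t'<m'. A $$ (r, t) * M $$ (t, t') * B $$ (t', s))"
proof -
  have "(A * M * B) $$ (r, s) = (\<Sum>t<m. A $$ (r, t) * (\<Sum>t'<m'. M $$ (t, t') * B $$ (t', s)))"
    using assms by (simp add: scalar_prod_def atLeast0LessThan)
  also have "\<dots> = (\<Sum>t<m. \<Sum>t'<m'. A $$ (r, t) * M $$ (t, t') * B $$ (t', s))"
    by (simp add: sum_distrib_left mult.assoc)
  finally show ?thesis .
qed

lemma index_cadj_mult_mult: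
  assumes V: "V \<in> carrier_mat m l" and X: "X \<in> carrier_mat m m" and "r < l" "s < l"
  shows "(cadj V * X * V) $$ (r, s) = (\<Sum>t<m. \<Sum>t'<m. cnj (V $$ (t, r)) * X $$ (t, t') * V $$ (t', s))"
  unfolding index_mult_mult[OF cadj_carrier_mat[OF V] X V assms(3,4)]
  using V assms(3) by (intro sum.cong refl) auto

lemma cinner_mult_mat_vec:
  assumes "M \<in> carrier_mat m m" "v \<in> carrier_vec m"
  shows "cinner v (M *\<^sub>v v) = (\<Sum>r<m. \<Sum>s<m. cnj (v $ r) * M $$ (r, s) * v $ s)"
  using assms by (simp add: cinner_def scalar_prod_def atLeast0LessThan sum_distrib_left mult.assoc)

lemma cinner_cadj_mult_mat_vec:
  assumes "V \<in> carrier_mat m l" "u \<in> carrier_vec l" "w \<in> carrier_vec m"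
  shows "cinner u (cadj V *\<^sub>v w) = cinner (V *\<^sub>v u) w"
proof -
  have "cinner u (cadj V *\<^sub>v w) = (\<Sum>s<l. \<Sum>r<m. cnj (u $ s) * cnj (V $$ (r, s)) * w $ r)"
    using assms by (simp add: cinner_def scalar_prod_def atLeast0LessThan sum_distrib_left mult.assoc)
  also have "\<dots> = (\<Sum>r<m. \<Sum>s<l. cnj (u $ s) * cnj (V $$ (r, s)) * w $ r)"
    by (rule sum.swap)
  also have "\<dots> = cinner (V *\<^sub>v u) w"
    using assms by (simp add: cinner_def scalar_prod_def atLeast0LessThan sum_distrib_left mult_ac)
  finally show ?thesis .
qed

lemma cinner_swap:
  assumes "u \<in> carrier_vec d" "v \<in> carrier_vec d"
  shows "cinner v u = cnj (cinner u v)"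
  using assms by (simp add: cinner_def mult.commute)

lemma psd_congruence:
  assumes X: "psd m X" and V: "V \<in> carrier_mat m l"
  shows "psd l (cadj V * X * V)"
  unfolding psd_def
proof (intro conjI ballI)
  show "cadj V * X * V \<in> carrier_mat l l"
    using X V cadj_carrier_mat[OF V] unfolding psd_def by (meson mult_carrier_mat)
  fix v :: "complex vec" assume v: "v \<in> carrier_vec l"
  have Xc: "X \<in> carrier_mat m m" using X by (simp add: psd_def)
  have V': "cadj V \<in> carrier_mat l m" using V by (rule cadj_carrier_mat)
  have "(cadj V * X * V) *\<^sub>v v = (cadj V * X) *\<^sub>v (V *\<^sub>v v)"
    using mult_carrier_mat[OF V' Xc] V v by (rule assoc_mult_mat_vec)
  also have "\<dots> = cadj V *\<^sub>v (X *\<^sub>v (V *\<^sub>v v))"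
    using V' Xc mult_mat_vec_carrier[OF V v] by (rule assoc_mult_mat_vec)
  finally have "(cadj V * X * V) *\<^sub>v v = cadj V *\<^sub>v (X *\<^sub>v (V *\<^sub>v v))" .
  then have "cinner v ((cadj V * X * V) *\<^sub>v v) = cinner (V *\<^sub>v v) (X *\<^sub>v (V *\<^sub>v v))"
    using Xc V v by (simp add: cinner_cadj_mult_mat_vec)
  moreover have "V *\<^sub>v v \<in> carrier_vec m" using V v by (rule mult_mat_vec_carrier)
  ultimately show "\<exists>r. r \<ge> 0 \<and> cinner v ((cadj V * X * V) *\<^sub>v v) = complex_of_real r"
    using X by (simp add: psd_def)
qed

lemma psd_sum_mat:
  assumes "finite I" and psd: "\<And>i. i \<in> I \<Longrightarrow> psd m (M i)"
  shows "psd m (mat m m (\<lambda>(r, s). \<Sum>i\<in>I. M i $$ (r, s)))"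
  unfolding psd_def
proof (intro conjI ballI)
  fix v :: "complex vec" assume v: "v \<in> carrier_vec m"
  have M: "M i \<in> carrier_mat m m" if "i \<in> I" for i
    using psd[OF that] by (simp add: psd_def)
  have "\<forall>i\<in>I. \<exists>r. r \<ge> 0 \<and> cinner v (M i *\<^sub>v v) = complex_of_real r"
    using psd v by (simp add: psd_def)
  then obtain q where q: "\<And>i. i \<in> I \<Longrightarrow> q i \<ge> 0 \<and> cinner v (M i *\<^sub>v v) = complex_of_real (q i)"
    by (metis bchoice)
  have "cinner v (mat m m (\<lambda>(r, s). \<Sum>i\<in>I. M i $$ (r, s)) *\<^sub>v v)
      = (\<Sum>r<m. \<Sum>s<m. \<Sum>i\<in>I. cnj (v $ r) * M i $$ (r, s) * v $ s)"
    unfolding cinner_mult_mat_vec[OF mat_carrier v]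
    by (intro sum.cong refl) (simp add: sum_distrib_left sum_distrib_right)
  also have "\<dots> = (\<Sum>i\<in>I. \<Sum>r<m. \<Sum>s<m. cnj (v $ r) * M i $$ (r, s) * v $ s)"
    by (simp add: sum.swap[of _ I])
  also have "\<dots> = (\<Sum>i\<in>I. cinner v (M i *\<^sub>v v))"
    using M v by (simp add: cinner_mult_mat_vec[of _ m])
  also have "\<dots> = complex_of_real (\<Sum>i\<in>I. q i)"
    using q by simp
  finally show "\<exists>r. r \<ge> 0 \<and> cinner v (mat m m (\<lambda>(r, s). \<Sum>i\<in>I. M i $$ (r, s)) *\<^sub>v v) = complex_of_real r"
    using q by (intro exI[of _ "\<Sum>i\<in>I. q i"]) (simp add: sum_nonneg)
qed simp

(* ampliation k K is the block-diagonal matrix I_k (x) K. *)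
definition ampliation :: "nat \<Rightarrow> complex mat \<Rightarrow> complex mat" where
  "ampliation k K = mat (k * dim_row K) (k * dim_col K) (\<lambda>(t, s).
     if t div dim_row K = s div dim_col K then K $$ (t mod dim_row K, s mod dim_col K) else 0)"

lemma ampliation_carrier_mat:
  assumes "K \<in> carrier_mat n d"
  shows "ampliation k K \<in> carrier_mat (k * n) (k * d)"
proof -
  have "dim_row K = n" "dim_col K = d" using assms by auto
  then show ?thesis by (simp add: ampliation_def)
qed

lemma block_index_less:
  assumes "a < k" "j < (n::nat)"
  shows "a * n + j < k * n"
proof -
  have "a * n + j < Suc a * n" using assms(2) by simp
  also have "\<dots> \<le> k * n" using assms(1) by (intro mult_le_mono1) simp
  finally show ?thesis .
qed

lemma index_ampliation:
  assumes "K \<in> carrier_mat n d" "c < k" "j < n" "a < k" "p < d"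
  shows "ampliation k K $$ (c * n + j, a * d + p) = (if c = a then K $$ (j, p) else 0)"
proof -
  have "dim_row K = n" "dim_col K = d" using assms(1) by auto
  moreover have "(c * n + j) div n = c" "(c * n + j) mod n = j" "(a * d + p) div d = a" "(a * d + p) mod d = p"
    using assms(3,5) by auto
  ultimately show ?thesis
    using assms block_index_less[of c k j n] block_index_less[of a k p d] by (simp add: ampliation_def)
qed

lemma sum_ampliation_column:
  assumes K: "K \<in> carrier_mat n d" and a: "a < k" and p: "p < d" and F: "\<And>t. F t 0 = 0"
  shows "(\<Sum>t<k * n. F t (ampliation k K $$ (t, a * d + p))) = (\<Sum>j<n. F (a * n + j) (K $$ (j, p)))"
proof -
  have "(\<Sum>t<k * n. F t (ampliation k K $$ (t, a * d + p)))
      = (\<Sum>c<k. \<Sum>j<n. if c = a then F (c * n + j) (K $$ (j, p)) else 0)"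
    unfolding sum_mult_split using K a p F by (intro sum.cong refl) (simp add: index_ampliation)
  also have "\<dots> = (\<Sum>c<k. if c = a then \<Sum>j<n. F (c * n + j) (K $$ (j, p)) else 0)"
    by (intro sum.cong refl) auto
  also have "\<dots> = (\<Sum>j<n. F (a * n + j) (K $$ (j, p)))"
    using a by simp
  finally show ?thesis .
qed

lemma block_carrier_mat: "block n X a b \<in> carrier_mat n n"
  by (simp add: block_def)

lemma index_cadj_ampliation_mult_mult:
  assumes K: "K \<in> carrier_mat n d" and X: "X \<in> carrier_mat (k * n) (k * n)"
    and a: "a < k" and b: "b < k" and p: "p < d" and q: "q < d"
  shows "(cadj (ampliation k K) * X * ampliation k K) $$ (a * d + p, b * d + q)
       = (cadj K * block n X a b * K) $$ (p, q)"
proof -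
  let ?A = "ampliation k K"
  have A: "?A \<in> carrier_mat (k * n) (k * d)" using K by (rule ampliation_carrier_mat)
  have "(cadj ?A * X * ?A) $$ (a * d + p, b * d + q)
      = (\<Sum>t<k * n. \<Sum>t'<k * n. cnj (?A $$ (t, a * d + p)) * X $$ (t, t') * ?A $$ (t', b * d + q))"
    using A X block_index_less[OF a p] block_index_less[OF b q] by (rule index_cadj_mult_mult)
  also have "\<dots> = (\<Sum>t<k * n. \<Sum>j'<n. cnj (?A $$ (t, a * d + p)) * X $$ (t, b * n + j') * K $$ (j', q))"
    by (rule sum.cong[OF refl], rule sum_ampliation_column[OF K b q,
          where F = "\<lambda>t' x. cnj (?A $$ (_, a * d + p)) * X $$ (_, t') * x"]) simp
  also have "\<dots> = (\<Sum>j<n. \<Sum>j'<n. cnj (K $$ (j, p)) * X $$ (a * n + j, b * n + j') * K $$ (j', q))"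
    by (rule sum_ampliation_column[OF K a p,
          where F = "\<lambda>t x. \<Sum>j'<n. cnj x * X $$ (t, b * n + j') * K $$ (j', q)"]) simp
  also have "\<dots> = (cadj K * block n X a b * K) $$ (p, q)"
    unfolding index_cadj_mult_mult[OF K block_carrier_mat p q] by (simp add: block_def)
  finally show ?thesis .
qed

definition kraus_map :: "nat \<Rightarrow> (nat \<Rightarrow> complex mat) \<Rightarrow> nat \<Rightarrow> complex mat \<Rightarrow> complex mat" where
  "kraus_map d K m X = msum d (\<lambda>i. cadj (K i) * X * K i) m"

lemma kraus_map_eq_mat:
  assumes K: "\<And>i. i < m \<Longrightarrow> K i \<in> carrier_mat n d" and X: "X \<in> carrier_mat n n"
  shows "kraus_map d K m X = mat d d (\<lambda>(r, s). \<Sum>i<m. (cadj (K i) * X * K i) $$ (r, s))"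
  unfolding kraus_map_def using K X by (intro msum_eq_mat) (meson cadj_carrier_mat mult_carrier_mat)

lemma completely_positive_kraus_map:
  assumes K: "\<And>i. i < m \<Longrightarrow> K i \<in> carrier_mat n d"
  shows "completely_positive n d (kraus_map d K m)"
  unfolding completely_positive_def
proof (intro conjI ballI allI impI)
  have K': "cadj (K i) \<in> carrier_mat d n" if "i < m" for i
    using K[OF that] by (rule cadj_carrier_mat)
  have dim_K: "dim_row (K i) = n" "dim_col (K i) = d" if "i < m" for i
    using K[OF that] by auto
  fix A B :: "complex mat" and c :: complex
  assume A: "A \<in> carrier_mat n n"
  show "kraus_map d K m A \<in> carrier_mat d d"
    by (simp add: kraus_map_eq_mat[OF K A])
  have "cadj (K i) * (c \<cdot>\<^sub>m A) * K i = c \<cdot>\<^sub>m (cadj (K i) * A * K i)" if "i < m" for i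
    unfolding mult_smult_distrib[OF K'[OF that] A]
    by (rule mult_smult_assoc_mat[OF mult_carrier_mat[OF K'[OF that] A] K[OF that]])
  then show "kraus_map d K m (c \<cdot>\<^sub>m A) = c \<cdot>\<^sub>m kraus_map d K m A"
    using A by (auto simp: kraus_map_eq_mat[OF K] sum_distrib_left dim_K intro!: eq_matI sum.cong)
  assume B: "B \<in> carrier_mat n n"
  have "cadj (K i) * (A + B) * K i = cadj (K i) * A * K i + cadj (K i) * B * K i" if "i < m" for i
    unfolding mult_add_distrib_mat[OF K'[OF that] A B]
    by (rule add_mult_distrib_mat[OF mult_carrier_mat[OF K'[OF that] A]
          mult_carrier_mat[OF K'[OF that] B] K[OF that]])
  then show "kraus_map d K m (A + B) = kraus_map d K m A + kraus_map d K m B"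
    using A B by (auto simp: kraus_map_eq_mat[OF K] sum.distrib[symmetric] dim_K intro!: eq_matI sum.cong)
next
  fix k X assume X: "psd (k * n) X"
  have Xc: "X \<in> carrier_mat (k * n) (k * n)" using X by (simp add: psd_def)
  have "mat (k * d) (k * d) (\<lambda>(r, s). kraus_map d K m (block n X (r div d) (s div d)) $$ (r mod d, s mod d))
      = mat (k * d) (k * d) (\<lambda>(r, s). \<Sum>i<m. (cadj (ampliation k (K i)) * X * ampliation k (K i)) $$ (r, s))"
  proof (rule cong_mat[OF refl refl])
    fix r s assume r: "r < k * d" and s: "s < k * d"
    then have d: "0 < d" by (cases d) auto
    have rs: "r div d < k" "s div d < k" "r mod d < d" "s mod d < d"
      using r s d by (auto simp: less_mult_imp_div_less)
    have "(cadj (ampliation k (K i)) * X * ampliation k (K i)) $$ (r, s)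
        = (cadj (K i) * block n X (r div d) (s div d) * K i) $$ (r mod d, s mod d)" if "i < m" for i
      using index_cadj_ampliation_mult_mult[OF K[OF that] Xc rs] by simp
    then show "(case (r, s) of (r, s) \<Rightarrow> kraus_map d K m (block n X (r div d) (s div d)) $$ (r mod d, s mod d))
        = (case (r, s) of (r, s) \<Rightarrow> \<Sum>i<m. (cadj (ampliation k (K i)) * X * ampliation k (K i)) $$ (r, s))"
      using rs by (simp add: kraus_map_eq_mat[OF K block_carrier_mat])
  qed
  moreover have "psd (k * d) (mat (k * d) (k * d) (\<lambda>(r, s). \<Sum>i<m. (cadj (ampliation k (K i)) * X * ampliation k (K i)) $$ (r, s)))"
    using K by (intro psd_sum_mat psd_congruence[OF X]) (auto simp: ampliation_carrier_mat)
  ultimately show "psd (k * d) (mat (k * d) (k * d) (\<lambda>(r, s). kraus_map d K m (block n X (r div d) (s div d)) $$ (r mod d, s mod d)))"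
    by simp
qed

lemma completely_positive_cong:
  assumes "\<And>X. X \<in> carrier_mat n n \<Longrightarrow> \<phi> X = \<psi> X"
  shows "completely_positive n d \<phi> \<longleftrightarrow> completely_positive n d \<psi>"
  using assms unfolding completely_positive_def by (simp add: block_carrier_mat)

lemma ket_carrier_mat: "v \<in> carrier_vec n \<Longrightarrow> ket v \<in> carrier_mat n 1"
  by (simp add: ket_def)

lemma bra_carrier_mat: "v \<in> carrier_vec n \<Longrightarrow> bra v \<in> carrier_mat 1 n"
  by (simp add: bra_def ket_def cadj_carrier_mat)

lemma ket_mult_bra: "ket u * bra v = mat (dim_vec u) (dim_vec v) (\<lambda>(r, s). u $ r * cnj (v $ s))"
  by (rule eq_matI) (simp_all add: ket_def bra_def cadj_def scalar_prod_def)

lemma ket_mult_bra_carrier_mat: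
  "u \<in> carrier_vec m \<Longrightarrow> v \<in> carrier_vec l \<Longrightarrow> ket u * bra v \<in> carrier_mat m l"
  by (meson bra_carrier_mat ket_carrier_mat mult_carrier_mat)

lemma cadj_ket_mult_bra: "cadj (ket u * bra v) = ket v * bra u"
  by (rule eq_matI) (auto simp: ket_mult_bra)

lemma ket_bra_sandwich_eq_cadj:
  assumes u: "u \<in> carrier_vec n" and v: "v \<in> carrier_vec d" and X: "X \<in> carrier_mat n n"
  shows "ket v * bra u * X * ket u * bra v = cadj (ket u * bra v) * X * (ket u * bra v)"
proof -
  have "ket v * bra u * X \<in> carrier_mat d n"
    using ket_mult_bra_carrier_mat[OF v u] X by (rule mult_carrier_mat)
  then show ?thesis
    unfolding cadj_ket_mult_bra
    using ket_carrier_mat[OF u] bra_carrier_mat[OF v] by (rule assoc_mult_mat)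
qed

lemma msum_ket_bra_sandwich_eq_kraus_map:
  assumes f: "\<And>i. i < n \<Longrightarrow> f i \<in> carrier_vec d" and X: "X \<in> carrier_mat n n"
  shows "msum d (\<lambda>i. ket (f i) * bra (unit_vec n i) * X * ket (unit_vec n i) * bra (f i)) n
       = kraus_map d (\<lambda>i. ket (unit_vec n i) * bra (f i)) n X"
  unfolding kraus_map_def using f X by (intro msum_cong ket_bra_sandwich_eq_cadj) simp_all

definition weighted_outer_sum :: "nat \<Rightarrow> (nat \<Rightarrow> complex vec) \<Rightarrow> (nat \<Rightarrow> complex) \<Rightarrow> nat \<Rightarrow> complex mat" where
  "weighted_outer_sum d f \<alpha> m = mat d d (\<lambda>(r, s). \<Sum>i<m. \<alpha> i * f i $ r * cnj (f i $ s))"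

lemma kraus_map_ket_unit_mult_bra:
  assumes f: "\<And>i. i < n \<Longrightarrow> f i \<in> carrier_vec d" and X: "X \<in> carrier_mat n n"
  shows "kraus_map d (\<lambda>i. ket (unit_vec n i) * bra (f i)) n X = weighted_outer_sum d f (\<lambda>i. X $$ (i, i)) n"
proof -
  let ?K = "\<lambda>i. ket (unit_vec n i) * bra (f i)"
  have K: "?K i \<in> carrier_mat n d" if "i < n" for i
    using f[OF that] by (simp add: ket_mult_bra_carrier_mat)
  have "(cadj (?K i) * X * ?K i) $$ (r, s) = X $$ (i, i) * f i $ r * cnj (f i $ s)"
    if i: "i < n" and r: "r < d" and s: "s < d" for i r s
  proof -
    have "(cadj (?K i) * X * ?K i) $$ (r, s)
        = (\<Sum>t<n. \<Sum>t'<n. cnj (?K i $$ (t, r)) * X $$ (t, t') * ?K i $$ (t', s))"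
      using K[OF i] X r s by (rule index_cadj_mult_mult)
    also have "\<dots> = (\<Sum>t<n. \<Sum>t'<n. if t = i \<and> t' = i then f i $ r * X $$ (t, t') * cnj (f i $ s) else 0)"
      using f[OF i] i r s by (intro sum.cong refl) (auto simp: ket_mult_bra)
    also have "\<dots> = X $$ (i, i) * f i $ r * cnj (f i $ s)"
      using i by (simp add: sum_sum_delta)
    finally show ?thesis .
  qed
  then show ?thesis
    by (auto simp: kraus_map_eq_mat[OF K X] weighted_outer_sum_def intro!: eq_matI sum.cong)
qed

lemma cadj_weighted_outer_sum:
  "cadj (weighted_outer_sum d f \<alpha> m) = weighted_outer_sum d f (\<lambda>i. cnj (\<alpha> i)) m"
  by (rule eq_matI) (auto simp: weighted_outer_sum_def mult_ac)

lemma weighted_outer_sum_mult_eq_0: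
  assumes f: "\<And>i. i < m \<Longrightarrow> f i \<in> carrier_vec d"
    and vanish: "\<And>i j. i < m \<Longrightarrow> j < m \<Longrightarrow> \<alpha> i * \<beta> j * cinner (f i) (f j) = 0"
  shows "weighted_outer_sum d f \<alpha> m * weighted_outer_sum d f \<beta> m = 0\<^sub>m d d"
proof (rule eq_matI)
  fix r s assume "r < dim_row (0\<^sub>m d d :: complex mat)" "s < dim_col (0\<^sub>m d d :: complex mat)"
  then have r: "r < d" and s: "s < d" by auto
  have "(weighted_outer_sum d f \<alpha> m * weighted_outer_sum d f \<beta> m) $$ (r, s)
     = (\<Sum>l<d. \<Sum>i<m. \<Sum>j<m. (\<alpha> i * f i $ r * cnj (f i $ l)) * (\<beta> j * f j $ l * cnj (f j $ s)))"
    using r s by (simp add: weighted_outer_sum_def scalar_prod_def atLeast0LessThan sum_product)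
  also have "\<dots> = (\<Sum>i<m. \<Sum>j<m. \<Sum>l<d. (\<alpha> i * f i $ r * cnj (f i $ l)) * (\<beta> j * f j $ l * cnj (f j $ s)))"
    by (simp add: sum.swap[of _ "{..<d}"])
  also have "\<dots> = (\<Sum>i<m. \<Sum>j<m. \<alpha> i * \<beta> j * cinner (f i) (f j) * (f i $ r * cnj (f j $ s)))"
  proof (intro sum.cong refl)
    fix i j assume "j \<in> {..<m}"
    then have "dim_vec (f j) = d" using f by auto
    then show "(\<Sum>l<d. (\<alpha> i * f i $ r * cnj (f i $ l)) * (\<beta> j * f j $ l * cnj (f j $ s)))
        = \<alpha> i * \<beta> j * cinner (f i) (f j) * (f i $ r * cnj (f j $ s))"
      by (simp add: cinner_def sum_distrib_left sum_distrib_right mult_ac)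
  qed
  also have "\<dots> = 0"
    by (intro sum.neutral ballI) (simp add: vanish)
  finally show "(weighted_outer_sum d f \<alpha> m * weighted_outer_sum d f \<beta> m) $$ (r, s) = 0\<^sub>m d d $$ (r, s)"
    using r s by simp
qed (simp_all add: weighted_outer_sum_def)

lemma orth_weighted_outer_sum:
  assumes f: "\<And>i. i < m \<Longrightarrow> f i \<in> carrier_vec d"
    and supp: "\<And>i j. i < m \<Longrightarrow> j < m \<Longrightarrow> cinner (f i) (f j) \<noteq> 0 \<Longrightarrow> \<alpha> i = 0 \<or> \<beta> j = 0"
  shows "orth (weighted_outer_sum d f \<alpha> m) (weighted_outer_sum d f \<beta> m)"
proof -
  have supp': "\<beta> i = 0 \<or> \<alpha> j = 0" if "i < m" "j < m" "cinner (f i) (f j) \<noteq> 0" for i j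
    using supp[of j i] that cinner_swap[OF f f, of i j] by auto
  have vanish: "\<alpha> i * \<beta> j * cinner (f i) (f j) = 0" "\<beta> i * \<alpha> j * cinner (f i) (f j) = 0"
    "cnj (\<alpha> i) * \<beta> j * cinner (f i) (f j) = 0" "\<alpha> i * cnj (\<beta> j) * cinner (f i) (f j) = 0"
    if "i < m" "j < m" for i j
    using supp[OF that] supp'[OF that] by (cases "cinner (f i) (f j) = 0"; auto)+
  show ?thesis
    unfolding orth_def cadj_weighted_outer_sum
    using weighted_outer_sum_mult_eq_0[OF f vanish(1)] weighted_outer_sum_mult_eq_0[OF f vanish(2)]
      weighted_outer_sum_mult_eq_0[OF f vanish(3)] weighted_outer_sum_mult_eq_0[OF f vanish(4)]
    by (simp add: weighted_outer_sum_def)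
qed

lemma eunit_eq_mat: "eunit n i j = mat n n (\<lambda>(r, s). if r = i \<and> s = j then 1 else 0)"
  by (rule eq_matI) (auto simp: eunit_def ket_mult_bra unit_vec_def)

lemma eunit_carrier_mat: "eunit n i j \<in> carrier_mat n n"
  by (simp add: eunit_eq_mat)

lemma index_mult_eunit_mult:
  assumes A: "A \<in> carrier_mat n n" and B: "B \<in> carrier_mat n n" and i: "i < n" and j: "j < n"
  shows "(A * eunit n i j * B) $$ (i, j) = A $$ (i, i) * B $$ (j, j)"
proof -
  have "(A * eunit n i j * B) $$ (i, j)
      = (\<Sum>t<n. \<Sum>t'<n. if t = i \<and> t' = j then A $$ (i, t) * B $$ (t', j) else 0)"
    unfolding index_mult_mult[OF A eunit_carrier_mat B i j]
    by (intro sum.cong refl) (auto simp: eunit_eq_mat)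
  also have "\<dots> = A $$ (i, i) * B $$ (j, j)"
    using i j by (rule sum_sum_delta)
  finally show ?thesis .
qed

lemma eunit_mem_graph_qgraph:
  assumes i: "i < n" and j: "j < n" and edge: "i = j \<or> E i j"
  shows "eunit n i j \<in> graph_qgraph n E"
proof -
  define c :: "nat \<Rightarrow> nat \<Rightarrow> complex" where "c a b = (if a = i \<and> b = j then 1 else 0)" for a b
  have "msum n (\<lambda>a. msum n (\<lambda>b. (if a = b \<or> E a b then c a b else 0) \<cdot>\<^sub>m eunit n a b) n) n
      = mat n n (\<lambda>(r, s). \<Sum>a<n. \<Sum>b<n. if a = r \<and> b = s then c a b else 0)"
    using edge by (auto simp: msum_eq_mat eunit_eq_mat c_def intro!: eq_matI sum.cong)
  also have "\<dots> = mat n n (\<lambda>(r, s). c r s)"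
    by (intro cong_mat refl) (auto simp: sum_sum_delta)
  also have "\<dots> = eunit n i j"
    by (simp add: eunit_eq_mat c_def)
  finally show ?thesis
    unfolding graph_qgraph_def by (intro CollectI exI[of _ c]) simp
qed

lemma classical_orth_rep_diag_vanish:
  assumes f: "classical_orth_rep n E d f" and A: "A \<in> carrier_mat n n" and B: "B \<in> carrier_mat n n"
    and annihilate: "\<forall>T \<in> graph_qgraph n E. A * T * B = 0\<^sub>m n n"
    and i: "i < n" and j: "j < n" and nonorth: "cinner (f i) (f j) \<noteq> 0"
  shows "A $$ (i, i) = 0 \<or> B $$ (j, j) = 0"
proof -
  have "i = j \<or> E i j"
    using f i j nonorth unfolding classical_orth_rep_def by blast
  then have "A * eunit n i j * B = 0\<^sub>m n n"
    using annihilate eunit_mem_graph_qgraph[OF i j] by blast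
  then show ?thesis
    using index_mult_eunit_mult[OF A B i j] i j by simp
qed

theorem proposition5p4:
  fixes n d :: nat and E :: "nat \<Rightarrow> nat \<Rightarrow> bool" and f :: "nat \<Rightarrow> complex vec"
  assumes "simple_graph n E"
    and "classical_orth_rep n E d f"
  shows "qgraph_orth_rep n (graph_qgraph n E) d
           (\<lambda>X. msum d (\<lambda>i. ket (f i) * bra (unit_vec n i) * X * ket (unit_vec n i) * bra (f i)) n)"
proof -
  let ?\<phi> = "\<lambda>X. msum d (\<lambda>i. ket (f i) * bra (unit_vec n i) * X * ket (unit_vec n i) * bra (f i)) n"
  let ?K = "\<lambda>i. ket (unit_vec n i) * bra (f i)"
  have f: "\<And>i. i < n \<Longrightarrow> f i \<in> carrier_vec d"
    using assms(2) by (simp add: classical_orth_rep_def)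
  have kraus: "?\<phi> X = kraus_map d ?K n X" if "X \<in> carrier_mat n n" for X
    using f that by (rule msum_ket_bra_sandwich_eq_kraus_map)
  have outer: "?\<phi> X = weighted_outer_sum d f (\<lambda>i. X $$ (i, i)) n" if "X \<in> carrier_mat n n" for X
    using kraus[OF that] kraus_map_ket_unit_mult_bra[OF f that] by simp
  have "completely_positive n d ?\<phi>"
    using completely_positive_cong[of n ?\<phi> "kraus_map d ?K n" d] kraus
      completely_positive_kraus_map[of n ?K n d] f by (simp add: ket_mult_bra_carrier_mat)
  moreover have "orth (?\<phi> A) (?\<phi> B)"
    if A: "A \<in> carrier_mat n n" and B: "B \<in> carrier_mat n n"
      and "\<forall>T \<in> graph_qgraph n E. A * T * B = 0\<^sub>m n n \<and> B * T * A = 0\<^sub>m n n \<and>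
                   cadj A * T * B = 0\<^sub>m n n \<and> A * T * cadj B = 0\<^sub>m n n" for A B
  proof -
    have annihilate: "\<forall>T \<in> graph_qgraph n E. A * T * B = 0\<^sub>m n n"
      using that(3) by blast
    show ?thesis
      unfolding outer[OF A] outer[OF B]
      using f classical_orth_rep_diag_vanish[OF assms(2) A B annihilate] by (rule orth_weighted_outer_sum)
  qed
  ultimately show ?thesis
    unfolding qgraph_orth_rep_def by blast
qed

end
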